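(* Let $M\ge1$. Given any $k\in\{0\}\times\mathbb{Z}^M_+$ and any $m\in\mathbb{Z}^{M+1}$ with $0\leq m\leq \min\{k,\tilde{k}\}$, there exists a transmission scattering sequence $\mathsf{p}\in\mathsf{S}_M^\prime$ such that $\bigl(\kappa^\prime(\mathsf{p}),\beta^\prime(\mathsf{p})\bigr)=(k,m)$.
   Context: Fix depths $z_{-1}<z_0<\cdots<z_M<z_{M+1}$; $\mathbb{Z}_+$ denotes the nonnegative integers. A transmission scattering sequence is a finite sequence $\mathsf{p}=(\mathsf{p}_0,\ldots,\mathsf{p}_L)$ with $\mathsf{p}_0=z_{-1}$, $\mathsf{p}_L=z_{M+1}$, $\mathsf{p}_i\in\{z_0,\ldots,z_M\}$ for $1\le i\le L-1$, and for every $0\le i\le L-1$ there is $-1\le j\le M$ with $\{\mathsf{p}_i,\mathsf{p}_{i+1}\}=\{z_j,z_{j+1}\}$; $\mathsf{S}_M^\prime$ is the set of these. For $0\le n\le M$, consider the maximal runs of consecutive indices $i$ with $\mathsf{p}_i\in\{z_n,\ldots,z_{M+1}\}$; the last such run (containing index $L$) is called the trunk run. Let $k_n$ be the number of such runs other than the trunk run, and $m_n$ the number of non-trunk runs of length at least 2. Set $\kappa^\prime(\mathsf{p})=(k_0,\ldots,k_M)$ and $\beta^\prime(\mathsf{p})=(m_0,\ldots,m_M)$. (Equivalently, collapsing the Dyck subpaths gives a tree with a distinguished root-to-tip trunk, and $k_n$, $m_n$ count the vertices, resp. branch points, at depth $z_n$ not on the trunk.) Notation: $\tilde{k}=(k_1,\ldots,k_M,0)$;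 $\min$ and $\le$ entrywise; $0$ denotes the zero vector. *)

theory Defs
  imports Complex_Main
begin

text \<open>Depths are z(-1) < z(0) < ... < z(M+1), given by z :: int => real.
  A sequence p = (p_0,...,p_L) is a list of length L+1.\<close>

definition trans_scat_seq :: "(int \<Rightarrow> real) \<Rightarrow> nat \<Rightarrow> real list \<Rightarrow> bool" where
  "trans_scat_seq z M p \<longleftrightarrow>
     p \<noteq> [] \<and>
     p ! 0 = z (-1) \<and>
     p ! (length p - 1) = z (int M + 1) \<and>
     (\<forall>i. 1 \<le> i \<and> i < length p - 1 \<longrightarrow> p ! i \<in> z ` {0..int M}) \<and>
     (\<forall>i. i < length p - 1 \<longrightarrow>
        (\<exists>j\<in>{-1..int M}. {p ! i, p ! (i+1)} = {z j, z (j+1)}))"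

definition in_level :: "(int \<Rightarrow> real) \<Rightarrow> nat \<Rightarrow> real list \<Rightarrow> nat \<Rightarrow> nat \<Rightarrow> bool" where
  "in_level z M p n i \<longleftrightarrow> p ! i \<in> z ` {int n..int M + 1}"

definition runs :: "(int \<Rightarrow> real) \<Rightarrow> nat \<Rightarrow> real list \<Rightarrow> nat \<Rightarrow> (nat \<times> nat) set" where
  "runs z M p n = {(a, b). a \<le> b \<and> b \<le> length p - 1 \<and>
      (\<forall>i\<in>{a..b}. in_level z M p n i) \<and>
      (a = 0 \<or> \<not> in_level z M p n (a - 1)) \<and>
      (b = length p - 1 \<or> \<not> in_level z M p n (b + 1))}"

text \<open>Non-trunk runs: those not containing the last index L.\<close>
definition kappa' :: "(int \<Rightarrow> real) \<Rightarrow> nat \<Rightarrow> real list \<Rightarrow> nat \<Rightarrow> nat" where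
  "kappa' z M p n = card {(a, b) \<in> runs z M p n. b < length p - 1}"

definition beta' :: "(int \<Rightarrow> real) \<Rightarrow> nat \<Rightarrow> real list \<Rightarrow> nat \<Rightarrow> nat" where
  "beta' z M p n = card {(a, b) \<in> runs z M p n. b < length p - 1 \<and> a < b}"

definition ktilde :: "nat \<Rightarrow> (nat \<Rightarrow> nat) \<Rightarrow> nat \<Rightarrow> nat" where
  "ktilde M k n = (if n < M then k (n + 1) else 0)"

end

(*
  Write p = map z W for an integer walk W from -1 to M + 1 with steps of size one.
  Every run of W in [n, \<infinity>) other than the trunk run ends with a step from level n down
  to n - 1, so kappa' counts these exits of W from [n, \<infinity>), and beta' counts the exits
  preceded by two consecutive points in [n, \<infinity>).

  The walk realising (k, m) traverses a tree made of strands. The non-trunk vertices at depth n are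
  numbered 0, ..., k n - 1, and vertex i at depth n + 1 is a child of vertex i at depth n if
  i < m n and of the trunk otherwise; the hypotheses m n \<le> k n and m n \<le> k (n + 1) say
  that these parents and children exist. Each strand, a maximal chain of such vertices, is
  traversed as one excursion from the trunk, and the run through vertex i at depth n is
  long exactly when i < m n.
*)

theory Submission
  imports Defs
begin

abbreviation unit_steps :: "int list \<Rightarrow> bool" where
  "unit_steps \<equiv> successively (\<lambda>x y. \<bar>x - y\<bar> = 1)"

fun exits :: "int \<Rightarrow> int list \<Rightarrow> nat" where
  "exits l (x # y # r) = of_bool (l \<le> x \<and> y < l) + exits l (y # r)"
| "exits l _ = 0"

fun long_exits :: "int \<Rightarrow> int list \<Rightarrow> nat" where
  "long_exits l (x # y # w # r) = of_bool (l \<le> x \<and> l \<le> y \<and> w < l) + long_exits l (y # w # r)"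
| "long_exits l _ = 0"

lemma card_nat_Collect_Suc_shift:
  assumes "\<And>b. P b \<Longrightarrow> b < n"
  shows "card {b. P b} = of_bool (P 0) + card {b. P (Suc b)}"
proof -
  have "{b. P b} = (if P 0 then {0} else {}) \<union> Suc ` {b. P (Suc b)}"
  proof (rule set_eqI)
    fix b
    show "b \<in> {b. P b} \<longleftrightarrow> b \<in> (if P 0 then {0} else {}) \<union> Suc ` {b. P (Suc b)}"
      by (cases b) auto
  qed
  moreover have "{b. P (Suc b)} \<subseteq> {..<n}"
    using assms Suc_lessD by blast
  then have "finite {b. P (Suc b)}"
    by (rule finite_subset) simp
  ultimately show ?thesis
    by (simp add: card_Un_disjoint card_image)
qed

lemma exits_card: "exits l xs = card {b. Suc b < length xs \<and> l \<le> xs ! b \<and> xs ! Suc b < l}"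
proof (induction l xs rule: exits.induct)
  case (1 l x y r)
  then show ?case by (subst card_nat_Collect_Suc_shift[of _ "length (x # y # r)"]) simp_all
qed simp_all

lemma long_exits_card:
  "long_exits l xs = card {b. Suc (Suc b) < length xs \<and> l \<le> xs ! b \<and> l \<le> xs ! Suc b \<and> xs ! Suc (Suc b) < l}"
proof (induction l xs rule: long_exits.induct)
  case (1 l x y w r)
  then show ?case by (subst card_nat_Collect_Suc_shift[of _ "length (x # y # w # r)"]) simp_all
qed simp_all

lemma exits_append_up_step:
  assumes "xs \<noteq> []" "ys \<noteq> []" "hd ys = last xs + 1"
  shows "exits l (xs @ ys) = exits l xs + exits l ys"
  using assms
proof (induction xs)
  case (Cons a xs)
  then show ?case by (cases xs; cases ys) auto
qed simp

lemma long_exits_append_up_step: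
  assumes "xs \<noteq> []" "unit_steps ys" "ys \<noteq> []" "hd ys = last xs + 1"
  shows "long_exits l (xs @ ys) = long_exits l xs + long_exits l ys"
  using assms
proof (induction xs rule: induct_list012)
  case 1
  then show ?case by simp
next
  case (2 x)
  then obtain r where ys: "ys = (x + 1) # r" by (cases ys) auto
  show ?case
  proof (cases r)
    case (Cons w r')
    then have "\<bar>x + 1 - w\<bar> = 1" using "2.prems" ys by simp
    then have "x \<le> w" by arith
    then show ?thesis using ys Cons by simp
  qed (simp add: ys)
next
  case (3 x y zs)
  have IH: "long_exits l (y # zs @ ys) = long_exits l (y # zs) + long_exits l ys"
    using "3.IH"(2) "3.prems" by simp
  show ?case
  proof (cases zs)
    case Nil
    with "3.prems" obtain r where "ys = (y + 1) # r" by (cases ys) auto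
    with IH Nil show ?thesis by simp
  next
    case (Cons w zs')
    with IH show ?thesis by simp
  qed
qed

lemma exits_snoc: "exits l (xs @ [y]) = exits l xs + of_bool (xs \<noteq> [] \<and> l \<le> last xs \<and> y < l)"
  by (induction l xs rule: exits.induct) auto

lemma long_exits_snoc:
  "long_exits l (xs @ [y]) =
     long_exits l xs + of_bool (2 \<le> length xs \<and> l \<le> last (butlast xs) \<and> l \<le> last xs \<and> y < l)"
  by (induction l xs rule: long_exits.induct) auto

abbreviation up_chain :: "int list list \<Rightarrow> bool" where
  "up_chain \<equiv> successively (\<lambda>xs ys. hd ys = last xs + 1)"

lemma hd_concat_up_chain:
  assumes "\<forall>ys\<in>set (xs # yss). ys \<noteq> []" "up_chain (xs # yss)" "yss \<noteq> []"
  shows "concat yss \<noteq> []" "hd (concat yss) = last xs + 1"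
  using assms by (auto simp: successively_Cons hd_concat)

lemma unit_steps_concat_up_chain:
  assumes "\<forall>ys\<in>set yss. ys \<noteq> []" "\<forall>ys\<in>set yss. unit_steps ys" "up_chain yss"
  shows "unit_steps (concat yss)"
  using assms
proof (induction yss)
  case (Cons ys yss)
  then have "unit_steps (concat yss)" by (auto simp: successively_Cons)
  moreover have "\<bar>last ys - hd (concat yss)\<bar> = 1" if "yss \<noteq> []"
    using hd_concat_up_chain(2)[of ys yss] that Cons.prems by auto
  ultimately show ?case
    using Cons.prems by (auto simp: successively_append_iff)
qed simp

lemma exits_concat_up_chain:
  assumes "\<forall>ys\<in>set yss. ys \<noteq> []" "up_chain yss"
  shows "exits l (concat yss) = (\<Sum>ys\<leftarrow>yss. exits l ys)"
  using assms
proof (induction yss)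
  case (Cons ys yss)
  show ?case
  proof (cases "yss = []")
    case False
    then show ?thesis
      using Cons hd_concat_up_chain[of ys yss] exits_append_up_step[of ys "concat yss" l]
      by (simp add: successively_Cons)
  qed simp
qed simp

lemma long_exits_concat_up_chain:
  assumes "\<forall>ys\<in>set yss. ys \<noteq> []" "\<forall>ys\<in>set yss. unit_steps ys" "up_chain yss"
  shows "long_exits l (concat yss) = (\<Sum>ys\<leftarrow>yss. long_exits l ys)"
  using assms
proof (induction yss)
  case (Cons ys yss)
  show ?case
  proof (cases "yss = []")
    case False
    have "unit_steps (concat yss)"
      using Cons.prems by (intro unit_steps_concat_up_chain) (auto simp: successively_Cons)
    then show ?thesis
      using False Cons hd_concat_up_chain[of ys yss] long_exits_append_up_step[of ys "concat yss" l]
      by (simp add: successively_Cons)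
  qed simp
qed simp

lemma ball_atLeastLessThan_split_lower:
  "(\<forall>i\<in>{n..<L}. Q i) \<longleftrightarrow> (n < L \<longrightarrow> Q n) \<and> (\<forall>i\<in>{Suc n..<L}. Q i)"
proof (cases "n < L")
  case True
  then have "{n..<L} = insert n {Suc n..<L}" by auto
  then show ?thesis using True by simp
qed simp

lemma ball_atLeastAtMost_split_lower:
  "(\<forall>i\<in>{n..L}. Q i) \<longleftrightarrow> (n \<le> L \<longrightarrow> Q n) \<and> (\<forall>i\<in>{Suc n..L}. Q i)"
proof (cases "n \<le> L")
  case True
  then show ?thesis by (simp add: Icc_eq_insert_lb_nat)
qed simp

function excursion :: "(nat \<Rightarrow> bool) \<Rightarrow> nat \<Rightarrow> nat \<Rightarrow> int list" where
  "excursion P M n = int n # (if n < M \<and> P n then excursion P M (Suc n) else []) @ [int n - 1]"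
  by pat_completeness auto
termination by (relation "measure (\<lambda>(P, M, n). M - n)") auto

declare excursion.simps [simp del]

lemma excursion_stop: "\<not> (n < M \<and> P n) \<Longrightarrow> excursion P M n = [int n, int n - 1]"
  by (subst excursion.simps) auto

lemma excursion_climb: "n < M \<Longrightarrow> P n \<Longrightarrow> excursion P M n = int n # excursion P M (Suc n) @ [int n - 1]"
  by (subst excursion.simps) simp

lemma excursion_ends: "\<exists>ys. excursion P M n = ys @ [int n, int n - 1]"
proof (induction P M n rule: excursion.induct)
  case (1 P M n)
  show ?case
  proof (cases "n < M \<and> P n")
    case True
    then obtain ys where "excursion P M (Suc n) = ys @ [int n + 1, int n]" using 1 by auto
    then show ?thesis using True by (simp add: excursion_climb)
  qed (simp add: excursion_stop)
qed

lemma excursion_ne: "excursion P M n \<noteq> []"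
  and hd_excursion: "hd (excursion P M n) = int n"
  and last_excursion: "last (excursion P M n) = int n - 1"
  using excursion_ends[of P M n] by (auto simp: excursion.simps[of P M n])

lemma unit_steps_excursion: "unit_steps (excursion P M n)"
proof (induction P M n rule: excursion.induct)
  case (1 P M n)
  show ?case
  proof (cases "n < M \<and> P n")
    case True
    then show ?thesis using 1
      by (simp add: excursion_climb successively_append_iff successively_Cons
          excursion_ne hd_excursion last_excursion)
  qed (simp add: excursion_stop)
qed

lemma set_excursion: "n \<le> M \<Longrightarrow> set (excursion P M n) \<subseteq> {int n - 1..int M}"
proof (induction P M n rule: excursion.induct)
  case (1 P M n)
  show ?case
  proof (cases "n < M \<and> P n")
    case True
    then show ?thesis using 1 by (force simp: excursion_climb)
  qed (use 1 in \<open>simp add: excursion_stop\<close>)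
qed

lemma exits_excursion:
  "exits (int L) (excursion P M n) = of_bool (n \<le> L \<and> (\<forall>i\<in>{n..<L}. i < M \<and> P i))"
proof (induction P M n rule: excursion.induct)
  case (1 P M n)
  show ?case
  proof (cases "n < M \<and> P n")
    case True
    let ?E = "excursion P M (Suc n)"
    have "exits (int L) (excursion P M n) = exits (int L) ([int n] @ ?E @ [int n - 1])"
      using True by (simp add: excursion_climb)
    also have "\<dots> = exits (int L) (?E @ [int n - 1])"
      by (subst exits_append_up_step) (simp_all add: excursion_ne hd_excursion)
    also have "\<dots> = exits (int L) ?E + of_bool (L = n)"
      by (auto simp: exits_snoc excursion_ne last_excursion)
    finally show ?thesis
      using 1 True by (auto simp: ball_atLeastLessThan_split_lower[of n])
  qed (auto simp: excursion_stop ball_atLeastLessThan_split_lower[of n])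
qed

lemma long_exits_excursion:
  "long_exits (int L) (excursion P M n) = of_bool (n \<le> L \<and> (\<forall>i\<in>{n..L}. i < M \<and> P i))"
proof (induction P M n rule: excursion.induct)
  case (1 P M n)
  show ?case
  proof (cases "n < M \<and> P n")
    case True
    let ?E = "excursion P M (Suc n)"
    obtain ys where E: "?E = ys @ [int n + 1, int n]"
      using excursion_ends[of P M "Suc n"] by auto
    have "long_exits (int L) (excursion P M n) = long_exits (int L) ([int n] @ ?E @ [int n - 1])"
      using True by (simp add: excursion_climb)
    also have "\<dots> = long_exits (int L) (?E @ [int n - 1])"
      by (subst long_exits_append_up_step)
        (simp_all add: excursion_ne hd_excursion successively_append_iff unit_steps_excursion
          last_excursion)
    also have "\<dots> = long_exits (int L) ?E + of_bool (L = n)"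
      by (simp only: E long_exits_snoc) (auto simp: butlast_append)
    finally show ?thesis
      using 1 True by (auto simp: ball_atLeastAtMost_split_lower[of n])
  qed (auto simp: excursion_stop ball_atLeastAtMost_split_lower[of n])
qed

definition maximal_runs :: "(nat \<Rightarrow> bool) \<Rightarrow> nat \<Rightarrow> (nat \<times> nat) set" where
  "maximal_runs P N = {(a, b). a \<le> b \<and> b \<le> N \<and> (\<forall>i\<in>{a..b}. P i) \<and>
      (a = 0 \<or> \<not> P (a - 1)) \<and> (b = N \<or> \<not> P (Suc b))}"

lemma runs_eq_maximal_runs: "runs z M p n = maximal_runs (in_level z M p n) (length p - 1)"
  by (simp add: runs_def maximal_runs_def)

lemma run_start_exists:
  fixes b :: nat
  shows "P b \<Longrightarrow> \<exists>a\<le>b. (\<forall>i\<in>{a..b}. P i) \<and> (a = 0 \<or> \<not> P (a - 1))"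
proof (induction b)
  case (Suc b)
  show ?case
  proof (cases "P b")
    case True
    with Suc.IH obtain a where "a \<le> b" "\<forall>i\<in>{a..b}. P i" "a = 0 \<or> \<not> P (a - 1)" by blast
    moreover have "{a..Suc b} = insert (Suc b) {a..b}" using \<open>a \<le> b\<close> by auto
    ultimately show ?thesis using Suc.prems by (intro exI[of _ a]) auto
  qed (use Suc.prems in auto)
qed auto

lemma maximal_runs_start_unique:
  assumes "(a, b) \<in> maximal_runs P N" "(a', b) \<in> maximal_runs P N"
  shows "a = a'"
proof -
  have *: False if "(a, b) \<in> maximal_runs P N" "(a', b) \<in> maximal_runs P N" "a < a'" for a a'
  proof -
    have "a' - 1 \<in> {a..b}" using that by (auto simp: maximal_runs_def)
    then show False using that by (auto simp: maximal_runs_def)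
  qed
  show ?thesis using *[OF assms] *[OF assms(2,1)] by (meson linorder_neqE_nat)
qed

lemma card_nonfinal_maximal_runs:
  "card {(a, b) \<in> maximal_runs P N. b < N} = card {b. b < N \<and> P b \<and> \<not> P (Suc b)}"
proof -
  let ?R = "{(a, b) \<in> maximal_runs P N. b < N}"
  have inj: "inj_on snd ?R"
  proof (rule inj_onI)
    fix x y assume "x \<in> ?R" "y \<in> ?R" "snd x = snd y"
    then show "x = y" using maximal_runs_start_unique[of "fst x" "snd x" P N "fst y"] by auto
  qed
  have image: "snd ` ?R = {b. b < N \<and> P b \<and> \<not> P (Suc b)}"
  proof
    show "snd ` ?R \<subseteq> {b. b < N \<and> P b \<and> \<not> P (Suc b)}"
      by (auto simp: maximal_runs_def)
    show "{b. b < N \<and> P b \<and> \<not> P (Suc b)} \<subseteq> snd ` ?R"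
    proof
      fix b assume b: "b \<in> {b. b < N \<and> P b \<and> \<not> P (Suc b)}"
      then obtain a where "a \<le> b" "\<forall>i\<in>{a..b}. P i" "a = 0 \<or> \<not> P (a - 1)"
        using run_start_exists[of P b] by auto
      then have "(a, b) \<in> ?R" using b by (auto simp: maximal_runs_def)
      then show "b \<in> snd ` ?R" by (rule rev_image_eqI) simp
    qed
  qed
  have "card ?R = card (snd ` ?R)" by (rule card_image[OF inj, symmetric])
  also have "\<dots> = card {b. b < N \<and> P b \<and> \<not> P (Suc b)}" by (simp only: image)
  finally show ?thesis .
qed

lemma card_long_nonfinal_maximal_runs:
  "card {(a, b) \<in> maximal_runs P N. b < N \<and> a < b}
     = card {c. Suc c < N \<and> P c \<and> P (Suc c) \<and> \<not> P (Suc (Suc c))}"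
proof -
  let ?R = "{(a, b) \<in> maximal_runs P N. b < N \<and> a < b}"
  let ?f = "\<lambda>(a, b). b - 1"
  have inj: "inj_on ?f ?R"
  proof (rule inj_onI)
    fix x y assume x: "x \<in> ?R" and y: "y \<in> ?R" and "?f x = ?f y"
    obtain a b a' b' where ab: "x = (a, b)" "y = (a', b')" by fastforce
    with x y \<open>?f x = ?f y\<close> have "b = b'" by auto
    with x y ab show "x = y" using maximal_runs_start_unique[of a b P N a'] by auto
  qed
  have image: "?f ` ?R = {c. Suc c < N \<and> P c \<and> P (Suc c) \<and> \<not> P (Suc (Suc c))}"
  proof
    show "?f ` ?R \<subseteq> {c. Suc c < N \<and> P c \<and> P (Suc c) \<and> \<not> P (Suc (Suc c))}"
    proof clarify
      fix a b assume "(a, b) \<in> maximal_runs P N" "b < N" "a < b"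
      moreover from this have "b - 1 \<in> {a..b}" "b \<in> {a..b}" by auto
      ultimately show "Suc (b - 1) < N \<and> P (b - 1) \<and> P (Suc (b - 1)) \<and> \<not> P (Suc (Suc (b - 1)))"
        by (auto simp: maximal_runs_def)
    qed
    show "{c. Suc c < N \<and> P c \<and> P (Suc c) \<and> \<not> P (Suc (Suc c))} \<subseteq> ?f ` ?R"
    proof
      fix c assume c: "c \<in> {c. Suc c < N \<and> P c \<and> P (Suc c) \<and> \<not> P (Suc (Suc c))}"
      then obtain a where "a \<le> Suc c" "\<forall>i\<in>{a..Suc c}. P i" "a = 0 \<or> \<not> P (a - 1)"
        using run_start_exists[of P "Suc c"] by auto
      moreover from this c have "a \<noteq> Suc c" by auto
      ultimately have "(a, Suc c) \<in> ?R" using c by (auto simp: maximal_runs_def)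
      then show "c \<in> ?f ` ?R" by (rule rev_image_eqI) simp
    qed
  qed
  have "card ?R = card (?f ` ?R)" by (rule card_image[OF inj, symmetric])
  also have "\<dots> = card {c. Suc c < N \<and> P c \<and> P (Suc c) \<and> \<not> P (Suc (Suc c))}"
    by (simp only: image)
  finally show ?thesis .
qed

lemma in_level_map_iff:
  assumes "strict_mono_on {-1..int M + 1} z" "set W \<subseteq> {-1..int M + 1}" "i < length W"
  shows "in_level z M (map z W) L i \<longleftrightarrow> int L \<le> W ! i"
proof -
  have W_i: "W ! i \<in> {-1..int M + 1}" using assms(2,3) nth_mem by blast
  have "in_level z M (map z W) L i \<longleftrightarrow> z (W ! i) \<in> z ` {int L..int M + 1}"
    using assms(3) by (simp add: in_level_def)
  also have "\<dots> \<longleftrightarrow> W ! i \<in> {int L..int M + 1}"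
    using strict_mono_on_imp_inj_on[OF assms(1)] W_i by (rule inj_on_image_mem_iff) simp
  also have "\<dots> \<longleftrightarrow> int L \<le> W ! i" using W_i by auto
  finally show ?thesis .
qed

lemma kappa'_map_eq_exits:
  assumes "strict_mono_on {-1..int M + 1} z" "set W \<subseteq> {-1..int M + 1}"
  shows "kappa' z M (map z W) L = exits (int L) W"
proof -
  have "kappa' z M (map z W) L
      = card {b. b < length W - 1 \<and> in_level z M (map z W) L b \<and> \<not> in_level z M (map z W) L (Suc b)}"
    by (simp add: kappa'_def runs_eq_maximal_runs card_nonfinal_maximal_runs)
  also have "\<dots> = exits (int L) W"
    unfolding exits_card using in_level_map_iff[OF assms] by (intro arg_cong[where f = card]) auto
  finally show ?thesis .
qed

lemma beta'_map_eq_long_exits: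
  assumes "strict_mono_on {-1..int M + 1} z" "set W \<subseteq> {-1..int M + 1}"
  shows "beta' z M (map z W) L = long_exits (int L) W"
proof -
  have "beta' z M (map z W) L
      = card {c. Suc c < length W - 1 \<and> in_level z M (map z W) L c \<and> in_level z M (map z W) L (Suc c)
                 \<and> \<not> in_level z M (map z W) L (Suc (Suc c))}"
    by (simp add: beta'_def runs_eq_maximal_runs card_long_nonfinal_maximal_runs)
  also have "\<dots> = long_exits (int L) W"
    unfolding long_exits_card using in_level_map_iff[OF assms] by (intro arg_cong[where f = card]) auto
  finally show ?thesis .
qed

lemma trans_scat_seq_map_walk:
  assumes W: "W = -1 # V @ [int M + 1]" and V: "set V \<subseteq> {0..int M}" and "unit_steps W"
  shows "trans_scat_seq z M (map z W)"
  unfolding trans_scat_seq_def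
proof (intro conjI allI impI)
  show "map z W \<noteq> []" "map z W ! 0 = z (-1)" "map z W ! (length (map z W) - 1) = z (int M + 1)"
    using W by (simp_all add: nth_append)
  fix i
  show "map z W ! i \<in> z ` {0..int M}" if "1 \<le> i \<and> i < length (map z W) - 1"
  proof -
    have "W ! i = V ! (i - 1)" "i - 1 < length V"
      using that W by (auto simp: nth_Cons' nth_append)
    then show ?thesis using that V nth_mem by fastforce
  qed
  show "\<exists>j\<in>{-1..int M}. {map z W ! i, map z W ! (i + 1)} = {z j, z (j + 1)}"
    if "i < length (map z W) - 1"
  proof -
    have i: "i < length W" "Suc i < length W" using that by auto
    have "set W \<subseteq> {-1..int M + 1}" using W V by auto
    then have range: "W ! i \<in> {-1..int M + 1}" "W ! Suc i \<in> {-1..int M + 1}"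
      using i nth_mem by blast+
    have "\<bar>W ! i - W ! Suc i\<bar> = 1" using successively_nth[OF \<open>unit_steps W\<close> i(2)] .
    then consider "W ! Suc i = W ! i + 1" | "W ! i = W ! Suc i + 1" by arith
    then show ?thesis
    proof cases
      case 1
      then show ?thesis using i range by (intro bexI[of _ "W ! i"]) auto
    next
      case 2
      then show ?thesis using i range by (intro bexI[of _ "W ! Suc i"]) auto
    qed
  qed
qed

lemma last_concat_nonempty:
  "\<forall>ys\<in>set yss. ys \<noteq> [] \<Longrightarrow> yss \<noteq> [] \<Longrightarrow> last (concat yss) = last (last yss)"
  by (induction yss) auto

lemma successively_all: "(\<And>x y. P x y) \<Longrightarrow> successively P xs"
  by (induction xs rule: induct_list012) auto

lemma successively_upt: "(\<And>i. a \<le> i \<Longrightarrow> Suc i < b \<Longrightarrow> P i (Suc i)) \<Longrightarrow> successively P [a..<b]"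
proof (induction b)
  case (Suc b)
  have "successively P [a..<b]" using Suc by simp
  moreover have "P (b - 1) b" if "a < b" using Suc.prems[of "b - 1"] that by simp
  ultimately show ?case by (cases "a < b") (auto simp: successively_append_iff)
qed simp

context
  fixes k m :: "nat \<Rightarrow> nat" and M :: nat
begin

text \<open>Strand i hangs off the trunk at level j when m j \<le> i < k (j + 1), and climbs through
  level n as long as i < m n.\<close>

definition strand_excursion :: "nat \<Rightarrow> nat \<Rightarrow> int list" where
  "strand_excursion i j = excursion (\<lambda>n. i < m n) M (Suc j)"

definition level_block :: "nat \<Rightarrow> int list" where
  "level_block j = concat ([int j] # map (\<lambda>i. strand_excursion i j) [m j..<ktilde M k j])"

definition tree_walk :: "int list" where
  "tree_walk = concat ([-1] # map level_block [0..<Suc M] @ [[int M + 1]])"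

definition strand_reaches :: "nat \<Rightarrow> nat \<Rightarrow> nat \<Rightarrow> bool" where
  "strand_reaches i j L \<longleftrightarrow> j < L \<and> m j \<le> i \<and> i < ktilde M k j \<and> (\<forall>n\<in>{Suc j..<L}. i < m n)"

lemma strand_excursion_shape:
  "strand_excursion i j \<noteq> []" "unit_steps (strand_excursion i j)"
  "hd (strand_excursion i j) = int j + 1" "last (strand_excursion i j) = int j"
  by (simp_all add: strand_excursion_def excursion_ne unit_steps_excursion hd_excursion last_excursion)

lemma level_block_pieces:
  fixes j :: nat and "is" :: "nat list"
  defines "yss \<equiv> [int j] # map (\<lambda>i. strand_excursion i j) is"
  shows "\<forall>ys\<in>set yss. ys \<noteq> []" "\<forall>ys\<in>set yss. unit_steps ys" "up_chain yss"
  unfolding yss_def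
  by (auto simp: strand_excursion_shape successively_Cons successively_map hd_map
      intro: successively_all)

lemma level_block_ends:
  "level_block j \<noteq> []" "hd (level_block j) = int j" "last (level_block j) = int j"
  unfolding level_block_def
  by (auto simp: last_concat_nonempty strand_excursion_shape last_map)

lemma unit_steps_level_block: "unit_steps (level_block j)"
  unfolding level_block_def by (intro unit_steps_concat_up_chain level_block_pieces)

lemma set_level_block:
  assumes "j \<le> M"
  shows "set (level_block j) \<subseteq> {int j..int M}"
proof -
  have excursions: "set (strand_excursion i j) \<subseteq> {int j..int M}" if "i \<in> {m j..<ktilde M k j}" for i
  proof -
    have "Suc j \<le> M" using that assms by (auto simp: ktilde_def split: if_splits)
    then show ?thesis using set_excursion[of "Suc j" M] by (simp add: strand_excursion_def)
  qed
  have "set (level_block j) = insert (int j) (\<Union>i\<in>{m j..<ktilde M k j}. set (strand_excursion i j))"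
    by (simp add: level_block_def)
  moreover have "(\<Union>i\<in>{m j..<ktilde M k j}. set (strand_excursion i j)) \<subseteq> {int j..int M}"
    by (rule UN_least) (rule excursions)
  ultimately show ?thesis using assms by auto
qed

lemma tree_walk_pieces:
  defines "yss \<equiv> [-1] # map level_block [0..<Suc M] @ [[int M + 1]]"
  shows "\<forall>ys\<in>set yss. ys \<noteq> []" "\<forall>ys\<in>set yss. unit_steps ys" "up_chain yss"
proof -
  show "\<forall>ys\<in>set yss. ys \<noteq> []" "\<forall>ys\<in>set yss. unit_steps ys"
    by (auto simp: yss_def level_block_ends unit_steps_level_block)
  have "up_chain (map level_block [0..<Suc M])"
    unfolding successively_map by (rule successively_upt) (simp add: level_block_ends)
  moreover have "hd (map level_block [0..<Suc M]) = level_block 0"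
    by (simp del: upt_Suc add: hd_map)
  moreover have "last (map level_block [0..<Suc M]) = level_block M"
    by (simp del: upt_Suc add: last_map)
  ultimately show "up_chain yss"
    unfolding yss_def
    by (simp del: upt_Suc add: successively_Cons successively_append_iff level_block_ends)
qed

lemma tree_walk_eq: "tree_walk = -1 # concat (map level_block [0..<Suc M]) @ [int M + 1]"
  by (simp add: tree_walk_def)

lemma unit_steps_tree_walk: "unit_steps tree_walk"
  unfolding tree_walk_def by (intro unit_steps_concat_up_chain tree_walk_pieces)

lemma set_tree_walk_interior: "set (concat (map level_block [0..<Suc M])) \<subseteq> {0..int M}"
proof
  fix x assume "x \<in> set (concat (map level_block [0..<Suc M]))"
  then obtain j where "j \<le> M" "x \<in> set (level_block j)" by (auto simp del: upt_Suc simp: less_Suc_eq_le)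
  then show "x \<in> {0..int M}" using set_level_block by fastforce
qed

lemma exits_tree_walk:
  "exits l tree_walk = (\<Sum>j\<le>M. \<Sum>i\<in>{m j..<ktilde M k j}. exits l (strand_excursion i j))"
proof -
  have "exits l (level_block j) = (\<Sum>i\<in>{m j..<ktilde M k j}. exits l (strand_excursion i j))" for j
    unfolding level_block_def exits_concat_up_chain[OF level_block_pieces(1,3)]
    by (simp add: interv_sum_list_conv_sum_set_nat o_def)
  then show ?thesis
    unfolding tree_walk_def exits_concat_up_chain[OF tree_walk_pieces(1,3)]
    by (simp del: upt_Suc add: interv_sum_list_conv_sum_set_nat o_def atLeast0LessThan lessThan_Suc_atMost)
qed

lemma long_exits_tree_walk:
  "long_exits l tree_walk = (\<Sum>j\<le>M. \<Sum>i\<in>{m j..<ktilde M k j}. long_exits l (strand_excursion i j))"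
proof -
  have "long_exits l (level_block j) = (\<Sum>i\<in>{m j..<ktilde M k j}. long_exits l (strand_excursion i j))" for j
    unfolding level_block_def long_exits_concat_up_chain[OF level_block_pieces]
    by (simp add: interv_sum_list_conv_sum_set_nat o_def)
  then show ?thesis
    unfolding tree_walk_def long_exits_concat_up_chain[OF tree_walk_pieces]
    by (simp del: upt_Suc add: interv_sum_list_conv_sum_set_nat o_def atLeast0LessThan lessThan_Suc_atMost)
qed

context
  assumes k0: "k 0 = 0" and m_le: "\<forall>n\<le>M. m n \<le> min (k n) (ktilde M k n)"
begin

lemma m_le_k: "n \<le> M \<Longrightarrow> m n \<le> k n"
  using m_le by simp

lemma m_le_k_Suc: "n < M \<Longrightarrow> m n \<le> k (Suc n)"
  using m_le[rule_format, of n] by (simp add: ktilde_def)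

lemma m_top: "m M = 0"
  using m_le by (auto simp: ktilde_def)

lemma card_strand_reaches: "L \<le> M \<Longrightarrow> card {j. strand_reaches i j L} = of_bool (i < k L)"
proof (induction L)
  case 0
  then show ?case by (simp add: strand_reaches_def k0)
next
  case (Suc L)
  then have L: "L < M" "L \<le> M" by simp_all
  have reaches_Suc: "strand_reaches i j (Suc L) \<longleftrightarrow>
      strand_reaches i j L \<and> i < m L \<or> j = L \<and> m L \<le> i \<and> i < k (Suc L)" for j
    using L by (auto simp: strand_reaches_def ktilde_def less_Suc_eq atLeastLessThanSuc)
  show ?case
  proof (cases "i < m L")
    case True
    then have "{j. strand_reaches i j (Suc L)} = {j. strand_reaches i j L}"
      using reaches_Suc by auto
    moreover have "i < k L" "i < k (Suc L)"
      using True m_le_k[OF L(2)] m_le_k_Suc[OF L(1)] by linarith+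
    ultimately show ?thesis using Suc.IH L by simp
  next
    case False
    then have "{j. strand_reaches i j (Suc L)} = (if i < k (Suc L) then {L} else {})"
      using reaches_Suc by auto
    then show ?thesis by simp
  qed
qed

lemma sum_strand_reaches:
  "L \<le> M \<Longrightarrow> (\<Sum>j\<le>M. of_bool (strand_reaches i j L \<and> Q)) = (of_bool (i < k L \<and> Q) :: nat)"
proof -
  assume "L \<le> M"
  then have "{..M} \<inter> {j. strand_reaches i j L} = {j. strand_reaches i j L}"
    by (auto simp: strand_reaches_def)
  then show ?thesis
    using card_strand_reaches[OF \<open>L \<le> M\<close>] by (cases Q) simp_all
qed

lemma exits_strand_excursion:
  "L \<le> M \<Longrightarrow> exits (int L) (strand_excursion i j) = of_bool (j < L \<and> (\<forall>n\<in>{Suc j..<L}. i < m n))"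
  by (auto simp: strand_excursion_def exits_excursion Suc_le_eq)

lemma long_exits_strand_excursion:
  "L \<le> M \<Longrightarrow> long_exits (int L) (strand_excursion i j)
     = of_bool (j < L \<and> (\<forall>n\<in>{Suc j..<L}. i < m n) \<and> i < m L)"
  using m_top by (auto simp: strand_excursion_def long_exits_excursion Suc_le_eq
      atLeastLessThanSuc_atLeastAtMost[symmetric] atLeastLessThanSuc le_less)

lemma card_strands_reaching:
  assumes "L \<le> M"
  shows "(\<Sum>j\<le>M. \<Sum>i\<in>{m j..<ktilde M k j}. of_bool (j < L \<and> (\<forall>n\<in>{Suc j..<L}. i < m n) \<and> Q i))
    = card {i. i < k L \<and> Q i}"
proof -
  define K where "K = (\<Sum>n\<le>M. k n)"
  have k_le: "k n \<le> K" if "n \<le> M" for n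
    unfolding K_def using that by (intro member_le_sum) auto
  then have ktilde_le: "ktilde M k j \<le> K" if "j \<le> M" for j
    using that by (simp add: ktilde_def)
  have inner: "(\<Sum>i\<in>{m j..<ktilde M k j}. of_bool (j < L \<and> (\<forall>n\<in>{Suc j..<L}. i < m n) \<and> Q i))
      = (\<Sum>i<K. of_bool (strand_reaches i j L \<and> Q i) :: nat)" if "j \<le> M" for j
    using ktilde_le[OF that]
    by (intro sum.mono_neutral_cong_left) (auto simp: strand_reaches_def)
  have "(\<Sum>j\<le>M. \<Sum>i\<in>{m j..<ktilde M k j}. of_bool (j < L \<and> (\<forall>n\<in>{Suc j..<L}. i < m n) \<and> Q i))
      = (\<Sum>j\<le>M. \<Sum>i<K. of_bool (strand_reaches i j L \<and> Q i) :: nat)"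
    by (rule sum.cong[OF refl], rule inner, simp)
  also have "\<dots> = (\<Sum>i<K. \<Sum>j\<le>M. of_bool (strand_reaches i j L \<and> Q i))"
    by (rule sum.swap)
  also have "\<dots> = (\<Sum>i<K. of_bool (i < k L \<and> Q i))"
    using sum_strand_reaches[OF assms] by simp
  also have "\<dots> = card {i. i < k L \<and> Q i}"
  proof -
    have "{..<K} \<inter> {i. i < k L \<and> Q i} = {i. i < k L \<and> Q i}"
      using k_le[OF assms] by auto
    then show ?thesis by simp
  qed
  finally show ?thesis .
qed

lemma exits_tree_walk_level: "L \<le> M \<Longrightarrow> exits (int L) tree_walk = k L"
  using card_strands_reaching[of L "\<lambda>_. True"] by (simp add: exits_tree_walk exits_strand_excursion)

lemma long_exits_tree_walk_level: "L \<le> M \<Longrightarrow> long_exits (int L) tree_walk = m L"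
proof -
  assume L: "L \<le> M"
  have "{i. i < k L \<and> i < m L} = {..<m L}" using m_le_k[OF L] by auto
  then show ?thesis
    using card_strands_reaching[OF L, of "\<lambda>i. i < m L"]
    by (simp add: long_exits_tree_walk long_exits_strand_excursion[OF L] conj_assoc)
qed

end

end

theorem proposition2:
  fixes z :: "int \<Rightarrow> real" and M :: nat and k m :: "nat \<Rightarrow> nat"
  assumes "strict_mono_on {-1..int M + 1} z"
    and "M \<ge> 1"
    and "k 0 = 0"
    and "\<forall>n\<le>M. m n \<le> min (k n) (ktilde M k n)"
  shows "\<exists>p. trans_scat_seq z M p \<and>
           (\<forall>n\<le>M. kappa' z M p n = k n \<and> beta' z M p n = m n)"
proof -
  let ?W = "tree_walk k m M"
  have W: "?W = -1 # concat (map (level_block k m M) [0..<Suc M]) @ [int M + 1]"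
    by (rule tree_walk_eq)
  have range: "set ?W \<subseteq> {-1..int M + 1}"
    using set_tree_walk_interior[of k m M] W by auto
  show ?thesis
  proof (intro exI conjI allI impI)
    show "trans_scat_seq z M (map z ?W)"
      using W set_tree_walk_interior unit_steps_tree_walk by (rule trans_scat_seq_map_walk)
    fix n assume "n \<le> M"
    show "kappa' z M (map z ?W) n = k n"
      using kappa'_map_eq_exits[OF assms(1) range] exits_tree_walk_level[OF assms(3,4) \<open>n \<le> M\<close>] by simp
    show "beta' z M (map z ?W) n = m n"
      using beta'_map_eq_long_exits[OF assms(1) range] long_exits_tree_walk_level[OF assms(3,4) \<open>n \<le> M\<close>] by simp
  qed
qed

end
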